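(* Let $R$ be a ring with unity and involution $*$, and let $a,b,c\in R$. Then $a$ is left dual $(b,c)$-core invertible if and only if $ab$ is left $(b^*,c)$-invertible. In this case, an element $x\in R$ is a left dual $(b,c)$-core inverse of $a$ if and only if $x$ is a left $(b^*,c)$-inverse of $ab$.
   Context: For $u,b,c\in R$, $u$ is left dual $(b,c)$-core invertible if there exists $x\in Rc$ with $bxub=b$ and $(xub)^*=xub$; such $x$ is a left dual $(b,c)$-core inverse of $u$. $u$ is left $(b,c)$-invertible if there exists $x\in Rc$ with $xub=b$ (equivalently $b\in Rcub$); such $x$ is a left $(b,c)$-inverse of $u$. *)

theory Defs
  imports Main
begin

definition ring_involution :: "('a::ring_1 \<Rightarrow> 'a) \<Rightarrow> bool" where
  "ring_involution s \<longleftrightarrow>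
     (\<forall>x y. s (x + y) = s x + s y) \<and>
     (\<forall>x y. s (x * y) = s y * s x) \<and>
     (\<forall>x. s (s x) = x)"

definition left_dual_bc_core_inverse ::
  "('a::ring_1 \<Rightarrow> 'a) \<Rightarrow> 'a \<Rightarrow> 'a \<Rightarrow> 'a \<Rightarrow> 'a \<Rightarrow> bool" where
  "left_dual_bc_core_inverse s b c u x \<longleftrightarrow>
     (\<exists>r. x = r * c) \<and> b * x * u * b = b \<and> s (x * u * b) = x * u * b"

definition left_dual_bc_core_invertible ::
  "('a::ring_1 \<Rightarrow> 'a) \<Rightarrow> 'a \<Rightarrow> 'a \<Rightarrow> 'a \<Rightarrow> bool" where
  "left_dual_bc_core_invertible s b c u \<longleftrightarrow> (\<exists>x. left_dual_bc_core_inverse s b c u x)"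

definition left_bc_inverse :: "'a::ring_1 \<Rightarrow> 'a \<Rightarrow> 'a \<Rightarrow> 'a \<Rightarrow> bool" where
  "left_bc_inverse b c u x \<longleftrightarrow> (\<exists>r. x = r * c) \<and> x * u * b = b"

definition left_bc_invertible :: "'a::ring_1 \<Rightarrow> 'a \<Rightarrow> 'a \<Rightarrow> bool" where
  "left_bc_invertible b c u \<longleftrightarrow> (\<exists>x. left_bc_inverse b c u x)"

end

theory Submission
  imports Defs
begin

text \<open>Write \<open>p = x a b\<close>. Applying the involution turns \<open>b p = b\<close> into \<open>p\<^sup>* b\<^sup>* = b\<^sup>*\<close>, so for
  hermitian \<open>p\<close> the left dual core condition is exactly \<open>p b\<^sup>* = b\<^sup>*\<close>, the left inverse
  condition. Conversely, \<open>p b\<^sup>* = b\<^sup>*\<close> together with \<open>p \<in> R b\<close> gives \<open>p p\<^sup>* = p\<^sup>*\<close>, and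
  \<open>p p\<^sup>*\<close> is hermitian, so \<open>p\<close> is hermitian as well.\<close>

lemma ring_involution_mult:
  "ring_involution s \<Longrightarrow> s (x * y) = s y * s x"
  unfolding ring_involution_def by blast

lemma ring_involution_involutive:
  "ring_involution s \<Longrightarrow> s (s x) = x"
  unfolding ring_involution_def by blast

lemma ring_involution_fixed_if_left_identity:
  fixes s :: "'a::ring_1 \<Rightarrow> 'a"
  assumes s: "ring_involution s" and p: "p = y * b" and left_id: "p * s b = s b"
  shows "s p = p"
proof -
  have "s p = s b * s y"
    using p ring_involution_mult[OF s] by simp
  then have idem: "p * s p = s p"
    using left_id by (simp add: mult.assoc[symmetric])
  have "s (p * s p) = p * s p"
    by (simp add: ring_involution_mult[OF s] ring_involution_involutive[OF s])
  then have "s (s p) = s p"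
    by (simp add: idem)
  then show ?thesis
    by (simp add: ring_involution_involutive[OF s])
qed

lemma ring_involution_right_identity_iff:
  fixes s :: "'a::ring_1 \<Rightarrow> 'a"
  assumes s: "ring_involution s" and p: "p = y * b"
  shows "b * p = b \<and> s p = p \<longleftrightarrow> p * s b = s b"
proof
  assume "b * p = b \<and> s p = p"
  then show "p * s b = s b"
    by (metis ring_involution_mult[OF s])
next
  assume left_id: "p * s b = s b"
  then have herm: "s p = p"
    using ring_involution_fixed_if_left_identity[OF s p] by blast
  have "b = s (p * s b)"
    using left_id by (simp add: ring_involution_involutive[OF s])
  also have "\<dots> = b * p"
    using herm by (simp add: ring_involution_mult[OF s] ring_involution_involutive[OF s])
  finally show "b * p = b \<and> s p = p"
    using herm by simp
qed

lemma left_dual_bc_core_inverse_iff_left_bc_inverse: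
  fixes s :: "'a::ring_1 \<Rightarrow> 'a"
  assumes "ring_involution s"
  shows "left_dual_bc_core_inverse s b c a x \<longleftrightarrow> left_bc_inverse (s b) c (a * b) x"
proof -
  have "b * (x * a * b) = b \<and> s (x * a * b) = x * a * b \<longleftrightarrow> x * a * b * s b = s b"
    using ring_involution_right_identity_iff[OF assms, where y = "x * a"] by blast
  then show ?thesis
    unfolding left_dual_bc_core_inverse_def left_bc_inverse_def
    by (simp add: mult.assoc)
qed

theorem theorem3p11:
  fixes s :: "'a::ring_1 \<Rightarrow> 'a" and a b c :: 'a
  assumes "ring_involution s"
  shows "(left_dual_bc_core_invertible s b c a \<longleftrightarrow> left_bc_invertible (s b) c (a * b))
         \<and> (left_dual_bc_core_invertible s b c a \<longrightarrow>
              (\<forall>x. left_dual_bc_core_inverse s b c a x \<longleftrightarrow> left_bc_inverse (s b) c (a * b) x))"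
  using left_dual_bc_core_inverse_iff_left_bc_inverse[OF assms]
  unfolding left_dual_bc_core_invertible_def left_bc_invertible_def
  by blast

end
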